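(* Let $\Omega\subset\mathbf{R}^2$ be a convex bounded domain whose boundary $\gamma$ is a smooth simple closed curve with curvature $k$ satisfying $0<\beta<\min_\gamma k$, and let $r=1/\beta$. Let $F$ be a nonzero real polynomial vanishing on $\gamma_{+r}\cup\gamma_{-r}$ and satisfying, for every $s$ and every $\epsilon$ in a neighborhood of $0$, $$F\big(\gamma(s)+rR_{-\epsilon}J\dot\gamma(s)\big)=F\big(\gamma(s)-rR_{\epsilon}J\dot\gamma(s)\big).$$ Let $f_\pm$ be the minimal defining polynomials of the irreducible components in $\mathbf{C}^2$ containing $\gamma_{\pm r}$, and suppose $f_+\neq f_-$ (the two curves lie on different components). Write $F=f_+^k f_-^l g_1$ where $g_1$ vanishes on $\gamma_{\pm r}$ at only finitely many points. Then $k=l$.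
   Context: $\gamma(s)$ is the arc-length parametrization of $\gamma$ in counterclockwise direction, $J$ is counterclockwise rotation by $\pi/2$, $R_\epsilon$ is counterclockwise rotation by angle $\epsilon$. The parallel curves are $\gamma_{\pm r}(s)=\gamma(s)\pm rJ\dot\gamma(s)$; under the hypotheses they are real algebraic curves. The displayed identity expresses that $F$ takes equal values at the center of a positive Larmor circle of radius $r$ hitting $\gamma$ at $\gamma(s)$ at angle $\epsilon$ and at the center of the reflected negative Larmor circle in the two-sided magnetic billiard (the magnetic field changes sign after each reflection). *)

theory Defs
  imports "HOL-Complex_Analysis.Complex_Analysis" "HOL-Computational_Algebra.Polynomial_Factorial"
begin

text \<open>The plane R^2 is identified with the complex numbers; J is multiplication by i,
  R_eps is multiplication by exp(i eps).  Bivariate polynomials are 'a poly poly: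
  the inner variable is x, the outer one is y.\<close>

definition eval2 :: "'a::comm_semiring_1 poly poly \<Rightarrow> 'a \<Rightarrow> 'a \<Rightarrow> 'a" where
  "eval2 P x y = poly (map_poly (\<lambda>c. poly c x) P) y"

definition evalR :: "real poly poly \<Rightarrow> complex \<Rightarrow> real" where
  "evalR P z = eval2 P (Re z) (Im z)"

definition evalC :: "complex poly poly \<Rightarrow> complex \<Rightarrow> complex" where
  "evalC P z = eval2 P (complex_of_real (Re z)) (complex_of_real (Im z))"

definition complexify :: "real poly poly \<Rightarrow> complex poly poly" where
  "complexify P = map_poly (map_poly complex_of_real) P"

definition vderiv :: "(real \<Rightarrow> complex) \<Rightarrow> real \<Rightarrow> complex" where
  "vderiv g t = vector_derivative g (at t)"

definition smooth_curve :: "(real \<Rightarrow> complex) \<Rightarrow> bool" where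
  "smooth_curve g \<longleftrightarrow> (\<forall>n t. (vderiv ^^ n) g differentiable at t)"

text \<open>Signed curvature of a unit-speed curve.\<close>
definition curvature :: "(real \<Rightarrow> complex) \<Rightarrow> real \<Rightarrow> real" where
  "curvature g s = Im (cnj (vderiv g s) * vderiv (vderiv g) s)"

definition parallel_curve :: "(real \<Rightarrow> complex) \<Rightarrow> real \<Rightarrow> real \<Rightarrow> complex" where
  "parallel_curve g d s = g s + complex_of_real d * \<i> * vderiv g s"

end

theory Submission
  imports Defs "HOL-Computational_Algebra.Field_as_Ring"
begin

text \<open>Pick a parameter s such that \<gamma>_{+r}(s) is a zero of f_+ at which the partial derivative
  in y of f_+ and the values of f_- and g_1 do not vanish, and symmetrically for \<gamma>_{-r}(s);
  by Bezout all but finitely many points of the parallel curves qualify.  The circle of radius r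
  about \<gamma>(s) is tangent to \<gamma>_{+r} at \<gamma>_{+r}(s), but \<gamma>(s) is not the centre of curvature of
  \<gamma>_{+r} there, so f_+ vanishes to order exactly two along the circle.  Hence
  \<epsilon> \<mapsto> F(\<gamma>(s) + r R_{-\<epsilon>} J \<gamma>'(s)) vanishes to order exactly 2k at \<epsilon> = 0, and likewise
  \<epsilon> \<mapsto> F(\<gamma>(s) - r R_\<epsilon> J \<gamma>'(s)) to order exactly 2l.  The symmetry hypothesis says that these
  two functions agree near 0, so k = l.\<close>

section \<open>Evaluation and common zeros of bivariate polynomials\<close>

lemma eval2_0 [simp]: "eval2 0 x y = 0"
  by (simp add: eval2_def)

lemma eval2_pCons [simp]: "eval2 (pCons c P) x y = poly c x + y * eval2 P x y"
  by (simp add: eval2_def map_poly_pCons)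

lemma eval2_add [simp]: "eval2 (P + Q) x y = eval2 P x y + eval2 Q x y"
proof (induction P arbitrary: Q)
  case (pCons a P)
  then show ?case by (cases Q) (auto simp: algebra_simps)
qed simp

lemma eval2_smult [simp]: "eval2 (smult a P) x y = poly a x * eval2 P x y"
  by (induction P) (auto simp: algebra_simps)

lemma eval2_mult [simp]: "eval2 (P * Q) x y = eval2 P x y * eval2 Q x y"
  by (induction P) (auto simp: algebra_simps)

lemma eval2_1 [simp]: "eval2 1 x y = 1"
  by (simp add: one_pCons)

lemma eval2_power [simp]: "eval2 (P ^ n) x y = eval2 P x y ^ n"
  by (induction n) auto

lemma evalC_mult [simp]: "evalC (P * Q) z = evalC P z * evalC Q z"
  by (simp add: evalC_def)

lemma evalC_power [simp]: "evalC (P ^ n) z = evalC P z ^ n"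
  by (simp add: evalC_def)

lemma evalC_complexify: "evalC (complexify F) z = complex_of_real (evalR F z)"
proof -
  have poly_of_real: "poly (map_poly of_real p) (of_real x) = complex_of_real (poly p x)" for p x
    by (induction p) (auto simp: map_poly_pCons)
  have "eval2 (complexify F) (of_real x) (of_real y) = complex_of_real (eval2 F x y)" for x y
    unfolding complexify_def by (induction F) (auto simp: map_poly_pCons poly_of_real)
  then show ?thesis
    by (simp add: evalC_def evalR_def)
qed

lemma fract_poly_clear_denominator:
  fixes X :: "'a::{idom_divide,ring_gcd,factorial_semiring,semiring_Gcd,semiring_gcd_mult_normalize}
    fract poly"
  obtains d X' where "d \<noteq> 0" "smult (to_fract d) X = fract_poly X'"
proof -
  have "\<exists>d X'. d \<noteq> 0 \<and> smult (to_fract d) X = fract_poly X'"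
  proof (induction X)
    case 0
    show ?case by (intro exI[of _ 1] exI[of _ 0]) simp
  next
    case (pCons c X)
    then obtain d X' where d: "d \<noteq> 0" "smult (to_fract d) X = fract_poly X'" by blast
    obtain a b where ab: "c = Fract a b" "b \<noteq> 0" by (cases c rule: Fract_cases)
    have "smult (to_fract (b * d)) (pCons c X)
        = pCons (to_fract (d * a)) (smult (to_fract b) (fract_poly X'))"
      using ab d by (simp add: Fract_conv_to_fract field_simps flip: smult_smult)
    also have "\<dots> = fract_poly (pCons (d * a) (smult b X'))"
      by (simp add: map_poly_pCons)
    finally show ?case using ab d by (intro exI[of _ "b * d"] exI) auto
  qed
  then show ?thesis using that by blast
qed

text \<open>An element D of least degree in the ideal (P, Q) divides both P and Q; as P is irreducible
  and does not divide Q, D is a unit.\<close>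

lemma field_poly_bezout:
  fixes P Q :: "'a::field poly"
  assumes irr: "irreducible P" and ndvd: "\<not> P dvd Q"
  obtains A B where "A * P + B * Q = 1"
proof -
  define S where "S = {D. D \<noteq> 0 \<and> (\<exists>A B. D = A * P + B * Q)}"
  have "P \<in> S"
    using irr unfolding S_def by (auto simp: irreducible_def intro: exI[of _ 1] exI[of _ 0])
  then obtain D where "D \<in> S" and minimal: "\<And>E. E \<in> S \<Longrightarrow> degree D \<le> degree E"
    using ex_has_least_nat[of "\<lambda>D. D \<in> S" P degree] by blast
  then obtain A0 B0 where D: "D \<noteq> 0" "D = A0 * P + B0 * Q"
    unfolding S_def by blast
  have D_dvd: "D dvd A1 * P + B1 * Q" for A1 B1
  proof (rule ccontr)
    let ?X = "A1 * P + B1 * Q"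
    assume "\<not> D dvd ?X"
    then have "?X mod D \<noteq> 0" by (simp add: dvd_eq_mod_eq_0)
    moreover have "?X mod D = (A1 - (?X div D) * A0) * P + (B1 - (?X div D) * B0) * Q"
      using D(2) by (simp add: minus_div_mult_eq_mod [symmetric] algebra_simps)
    ultimately have "degree D \<le> degree (?X mod D)"
      by (intro minimal) (auto simp: S_def)
    with degree_mod_less[OF D(1)] \<open>?X mod D \<noteq> 0\<close> show False
      by (metis not_le)
  qed
  have "D dvd P" using D_dvd[of 1 0] by simp
  have "D dvd Q" using D_dvd[of 0 1] by simp
  have "is_unit D"
  proof (rule ccontr)
    assume "\<not> is_unit D"
    then have "P dvd D"
      using irr \<open>D dvd P\<close> by (metis dvdE dvd_mult_unit_iff dvd_refl irreducibleD)
    with \<open>D dvd Q\<close> ndvd show False by (meson dvd_trans)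
  qed
  then obtain U where "1 = D * U" by (auto elim: dvdE)
  with D(2) show ?thesis
    by (intro that[of "U * A0" "U * B0"]) (simp add: algebra_simps)
qed

lemma exists_nonzero_elimination_poly:
  fixes p q :: "'a::field_gcd poly poly"
  assumes irr: "irreducible p" and deg: "degree p > 0" and ndvd: "\<not> p dvd q"
  obtains A B R where "R \<noteq> 0" "A * p + B * q = [:R:]"
proof -
  from deg irr have irr_fract: "irreducible (fract_poly p)" and "content p = 1"
    using nonconst_poly_irreducible_iff[of p] by auto
  then have "\<not> fract_poly p dvd fract_poly q"
    using fract_poly_dvdD ndvd by blast
  then obtain A B where AB: "A * fract_poly p + B * fract_poly q = 1"
    using field_poly_bezout[OF irr_fract] by blast
  obtain dA A' where A': "dA \<noteq> 0" "smult (to_fract dA) A = fract_poly A'"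
    by (rule fract_poly_clear_denominator)
  obtain dB B' where B': "dB \<noteq> 0" "smult (to_fract dB) B = fract_poly B'"
    by (rule fract_poly_clear_denominator)
  have "fract_poly (smult dB A' * p + smult dA B' * q)
      = smult (to_fract (dA * dB)) (A * fract_poly p + B * fract_poly q)"
    by (simp flip: A'(2) B'(2) add: smult_add_right ac_simps)
  also have "\<dots> = fract_poly [:dA * dB:]"
    by (simp add: AB map_poly_pCons)
  finally have "smult dB A' * p + smult dA B' * q = [:dA * dB:]"
    by (simp only: fract_poly_eq_iff)
  with A'(1) B'(1) show ?thesis
    by (intro that[of "dA * dB" "smult dB A'" "smult dA B'"]) auto
qed

lemma content_eq_1_imp_eval_x_neq_0:
  fixes p :: "'a::field_gcd poly poly"
  assumes "content p = 1"
  shows "map_poly (\<lambda>c. poly c x) p \<noteq> 0"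
proof
  assume "map_poly (\<lambda>c. poly c x) p = 0"
  then have "poly (coeff p i) x = 0" for i
    by (metis coeff_0 coeff_map_poly poly_0)
  then have "[:-x, 1:] dvd coeff p i" for i
    by (simp add: poly_eq_0_iff_dvd)
  then have "[:-x, 1:] dvd content p"
    by (simp add: const_poly_dvd_iff const_poly_dvd_iff_dvd_content [symmetric])
  with assms show False
    by (simp add: is_unit_iff_degree)
qed

lemma finite_common_zeros:
  fixes p q :: "complex poly poly"
  assumes irr: "irreducible p" and deg: "degree p > 0" and ndvd: "\<not> p dvd q"
  shows "finite {z. evalC p z = 0 \<and> evalC q z = 0}"
proof -
  obtain A B R where R: "R \<noteq> 0" "A * p + B * q = [:R:]"
    using exists_nonzero_elimination_poly[OF assms] .
  have "content p = 1"
    using deg irr nonconst_poly_irreducible_iff[of p] by auto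
  define Zs where
    "Zs = Sigma {x. poly R x = 0} (\<lambda>x. {y. poly (map_poly (\<lambda>c. poly c x) p) y = 0})"
  define xy where "xy z = (complex_of_real (Re z), complex_of_real (Im z))" for z
  have "finite Zs"
    unfolding Zs_def using R(1) content_eq_1_imp_eval_x_neq_0[OF \<open>content p = 1\<close>]
    by (intro finite_SigmaI poly_roots_finite) auto
  moreover have "inj xy"
    by (auto simp: inj_def xy_def complex_eq_iff)
  ultimately have "finite (xy -` Zs)"
    by (rule finite_vimageI)
  moreover have "{z. evalC p z = 0 \<and> evalC q z = 0} \<subseteq> xy -` Zs"
  proof safe
    fix z assume "evalC p z = 0" "evalC q z = 0"
    then have "evalC [:R:] z = 0"
      by (simp add: evalC_def flip: R(2))
    then have "poly R (complex_of_real (Re z)) = 0"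
      by (simp add: evalC_def)
    with \<open>evalC p z = 0\<close> show "z \<in> xy -` Zs"
      by (simp add: Zs_def xy_def evalC_def eval2_def)
  qed
  ultimately show ?thesis
    by (rule finite_subset[rotated])
qed

section \<open>Derivatives along paths\<close>

lemma has_vector_derivative_of_constant_eq_0:
  assumes "\<And>t. f t = c" and "(f has_vector_derivative D) (at t)"
  shows "D = 0"
  using assms vector_derivative_unique_at has_vector_derivative_const by (metis ext)

(* The inner variable is x, so partial_x is the partial derivative in x, while pderiv, acting on
   the outer variable, is the partial derivative in y. *)

definition partial_x :: "'a::idom poly poly \<Rightarrow> 'a poly poly" where
  "partial_x f = map_poly pderiv f"

definition dir_deriv :: "complex poly poly \<Rightarrow> complex \<Rightarrow> complex \<Rightarrow> complex" where
  "dir_deriv f z v = evalC (partial_x f) z * of_real (Re v) + evalC (pderiv f) z * of_real (Im v)"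

definition hessian_form ::
  "complex poly poly \<Rightarrow> complex \<Rightarrow> complex \<Rightarrow> complex \<Rightarrow> complex" where
  "hessian_form f z v w =
     dir_deriv (partial_x f) z v * of_real (Re w) + dir_deriv (pderiv f) z v * of_real (Im w)"

lemma dir_deriv_add: "dir_deriv f z (v + w) = dir_deriv f z v + dir_deriv f z w"
  by (simp add: dir_deriv_def algebra_simps)

lemma dir_deriv_scale: "dir_deriv f z (of_real a * v) = of_real a * dir_deriv f z v"
  by (simp add: dir_deriv_def algebra_simps)

lemma hessian_form_scale:
  "hessian_form f z (of_real a * v) (of_real a * v) = of_real (a * a) * hessian_form f z v v"
  unfolding hessian_form_def dir_deriv_scale by (simp add: algebra_simps)

lemma dir_deriv_normal_neq_0:
  assumes "norm T = 1" and "dir_deriv f z T = 0" and "evalC (pderiv f) z \<noteq> 0"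
  shows "dir_deriv f z (\<i> * T) \<noteq> 0"
proof
  assume "dir_deriv f z (\<i> * T) = 0"
  have "(Re T)\<^sup>2 + (Im T)\<^sup>2 = 1"
    using assms(1) by (simp add: cmod_power2 [symmetric])
  then have "evalC (pderiv f) z = evalC (pderiv f) z * of_real ((Re T)\<^sup>2 + (Im T)\<^sup>2)"
    by simp
  also have "\<dots> = of_real (Re T) * dir_deriv f z (\<i> * T) + of_real (Im T) * dir_deriv f z T"
    by (simp add: dir_deriv_def power2_eq_square algebra_simps)
  finally show False
    using assms(2,3) \<open>dir_deriv f z (\<i> * T) = 0\<close> by simp
qed

lemma has_vector_derivative_eval2:
  fixes f :: "complex poly poly" and X Y :: "real \<Rightarrow> complex"
  assumes X: "(X has_vector_derivative X') (at t within S)"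
    and Y: "(Y has_vector_derivative Y') (at t within S)"
  shows "((\<lambda>t. eval2 f (X t) (Y t)) has_vector_derivative
     eval2 (partial_x f) (X t) (Y t) * X' + eval2 (pderiv f) (X t) (Y t) * Y') (at t within S)"
proof (induction f)
  case (pCons c f)
  have "((\<lambda>t. poly c (X t)) has_vector_derivative X' * poly (pderiv c) (X t)) (at t within S)"
    using field_vector_diff_chain_within[OF X, of "poly c"]
    by (simp add: o_def has_field_derivative_at_within)
  from has_vector_derivative_add[OF this has_vector_derivative_mult[OF Y pCons.IH]]
  show ?case
    by (simp add: partial_x_def map_poly_pCons pderiv_pCons algebra_simps)
qed (simp add: partial_x_def)

lemma has_vector_derivative_evalC:
  assumes "(P has_vector_derivative P') (at t within S)"
  shows "((\<lambda>t. evalC f (P t)) has_vector_derivative dir_deriv f (P t) P') (at t within S)"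
proof -
  have "((\<lambda>t. complex_of_real (Re (P t))) has_vector_derivative of_real (Re P')) (at t within S)"
       "((\<lambda>t. complex_of_real (Im (P t))) has_vector_derivative of_real (Im P')) (at t within S)"
    using assms
    by (auto intro!: has_vector_derivative_of_real simp: has_vector_derivative_complex_iff)
  from has_vector_derivative_eval2[OF this, of f] show ?thesis
    by (simp add: evalC_def dir_deriv_def)
qed

lemma has_vector_derivative_dir_deriv:
  assumes "(P has_vector_derivative P1 t) (at t)" and "(P1 has_vector_derivative P2) (at t)"
  shows "((\<lambda>t. dir_deriv f (P t) (P1 t)) has_vector_derivative
           hessian_form f (P t) (P1 t) (P1 t) + dir_deriv f (P t) P2) (at t)"
proof -
  have "((\<lambda>t. complex_of_real (Re (P1 t))) has_vector_derivative complex_of_real (Re P2)) (at t)"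
       "((\<lambda>t. complex_of_real (Im (P1 t))) has_vector_derivative complex_of_real (Im P2)) (at t)"
    using assms(2)
    by (auto intro!: has_vector_derivative_of_real simp: has_vector_derivative_complex_iff)
  with assms(1) have "((\<lambda>t. dir_deriv f (P t) (P1 t)) has_vector_derivative
       evalC (partial_x f) (P t) * of_real (Re P2)
         + dir_deriv (partial_x f) (P t) (P1 t) * of_real (Re (P1 t))
     + (evalC (pderiv f) (P t) * of_real (Im P2)
         + dir_deriv (pderiv f) (P t) (P1 t) * of_real (Im (P1 t)))) (at t)"
    unfolding dir_deriv_def[of f]
    by (intro has_vector_derivative_add has_vector_derivative_mult has_vector_derivative_evalC)
  then show ?thesis
    by (simp add: dir_deriv_def[of f] hessian_form_def algebra_simps)
qed

lemma evalC_vanishing_on_path: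
  assumes P: "\<And>t. (P has_vector_derivative P1 t) (at t)"
    and P1: "(P1 has_vector_derivative P2) (at s)" and zero: "\<And>t. evalC f (P t) = 0"
  shows dir_deriv_vanishing_on_path: "dir_deriv f (P t) (P1 t) = 0"
    and hessian_form_vanishing_on_path:
      "hessian_form f (P s) (P1 s) (P1 s) + dir_deriv f (P s) P2 = 0"
proof -
  show first: "dir_deriv f (P t) (P1 t) = 0" for t
    by (rule has_vector_derivative_of_constant_eq_0[OF zero has_vector_derivative_evalC[OF P]])
  show "hessian_form f (P s) (P1 s) (P1 s) + dir_deriv f (P s) P2 = 0"
    by (rule has_vector_derivative_of_constant_eq_0[OF first
          has_vector_derivative_dir_deriv[OF P P1]])
qed

lemma has_vector_derivative_cis_circle:
  "((\<lambda>e. of_real d * cis (\<sigma> * e) * w) has_vector_derivative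
     \<i> * of_real \<sigma> * (of_real d * cis (\<sigma> * e) * w)) (at e)"
proof -
  have "((\<lambda>e. cis (\<sigma> * e)) has_vector_derivative \<i> * of_real \<sigma> * cis (\<sigma> * e)) (at e)"
    unfolding has_vector_derivative_complex_iff by (auto intro!: derivative_eq_intros simp: cis.sel)
  then have "((\<lambda>e. of_real d * (cis (\<sigma> * e) * w)) has_vector_derivative
      of_real d * (\<i> * of_real \<sigma> * cis (\<sigma> * e) * w)) (at e)"
    by (intro has_vector_derivative_mult_right has_vector_derivative_mult_left)
  then show ?thesis
    by (simp add: ac_simps)
qed

section \<open>Orders of vanishing\<close>

lemma tendsto_div_square_real:
  fixes u v :: "real \<Rightarrow> real"
  assumes "u 0 = 0" and u: "\<And>e. DERIV u e :> v e" and "v 0 = 0" and v: "DERIV v 0 :> c"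
  shows "((\<lambda>e. u e / e\<^sup>2) \<longlongrightarrow> c / 2) (at 0)"
proof (rule lhopital[where f' = v and g' = "\<lambda>e. 2 * e"])
  show "(u \<longlongrightarrow> 0) (at 0)"
    using DERIV_isCont[OF u, of 0] \<open>u 0 = 0\<close> by (simp add: isCont_def)
  show "((\<lambda>e. e\<^sup>2) \<longlongrightarrow> 0) (at (0::real))"
    by (auto intro!: tendsto_eq_intros)
  show "\<forall>\<^sub>F x in at 0. x\<^sup>2 \<noteq> (0::real)" "\<forall>\<^sub>F x in at 0. 2 * x \<noteq> (0::real)"
    by (auto simp: eventually_at_filter)
  show "\<forall>\<^sub>F x in at 0. DERIV u x :> v x"
    using u by simp
  show "\<forall>\<^sub>F x in at 0. DERIV (\<lambda>e. e\<^sup>2) x :> 2 * x"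
    by (auto intro!: always_eventually derivative_eq_intros)
  have "((\<lambda>h. v h / h) \<longlongrightarrow> c) (at 0)"
    using v \<open>v 0 = 0\<close> by (simp add: DERIV_def)
  then show "((\<lambda>x. v x / (2 * x)) \<longlongrightarrow> c / 2) (at 0)"
    by (auto dest: tendsto_divide[where b = 2 and g = "\<lambda>_. 2"] simp: field_simps)
qed

lemma tendsto_div_square:
  fixes \<phi> \<phi>' :: "real \<Rightarrow> complex"
  assumes "\<phi> 0 = 0" and "\<And>e. (\<phi> has_vector_derivative \<phi>' e) (at e)" and "\<phi>' 0 = 0"
    and "(\<phi>' has_vector_derivative c) (at 0)"
  shows "((\<lambda>e. \<phi> e / of_real e ^ 2) \<longlongrightarrow> c / 2) (at 0)"
proof -
  have "((\<lambda>e. Re (\<phi> e) / e\<^sup>2) \<longlongrightarrow> Re c / 2) (at 0)"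
    by (rule tendsto_div_square_real[where v = "\<lambda>e. Re (\<phi>' e)"])
       (use assms in \<open>auto intro: has_field_derivative_Re\<close>)
  moreover have "((\<lambda>e. Im (\<phi> e) / e\<^sup>2) \<longlongrightarrow> Im c / 2) (at 0)"
    by (rule tendsto_div_square_real[where v = "\<lambda>e. Im (\<phi>' e)"])
       (use assms in \<open>auto intro: has_field_derivative_Im\<close>)
  ultimately show ?thesis
    unfolding tendsto_complex_iff
    by (simp flip: of_real_power add: Re_divide_of_real Im_divide_of_real)
qed

lemma evalC_path_second_order:
  assumes P: "\<And>e. (P has_vector_derivative P1 e) (at e)"
    and P1: "(P1 has_vector_derivative P2) (at 0)" and "evalC f (P 0) = 0" and "dir_deriv f (P 0) (P1 0) = 0"
  shows "((\<lambda>e. evalC f (P e) / of_real e ^ 2) \<longlongrightarrow>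
           (hessian_form f (P 0) (P1 0) (P1 0) + dir_deriv f (P 0) P2) / 2) (at 0)"
  using assms
  by (intro tendsto_div_square[where \<phi>' = "\<lambda>e. dir_deriv f (P e) (P1 e)"]
      has_vector_derivative_evalC has_vector_derivative_dir_deriv)

lemma vanishing_order_le:
  fixes \<phi> :: "real \<Rightarrow> 'a::real_normed_field"
  assumes "((\<lambda>e. \<phi> e / of_real e ^ m) \<longlongrightarrow> a) (at 0)" and "a \<noteq> 0"
    and "((\<lambda>e. \<phi> e / of_real e ^ n) \<longlongrightarrow> b) (at 0)"
  shows "n \<le> m"
proof (rule ccontr)
  assume "\<not> n \<le> m"
  have "of_real e ^ (n - m) * (\<phi> e / of_real e ^ n) = \<phi> e / of_real e ^ m" if "e \<noteq> 0" for e
  proof -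
    have "(of_real e :: 'a) ^ n = of_real e ^ (n - m) * of_real e ^ m"
      using \<open>\<not> n \<le> m\<close> by (simp flip: power_add)
    with that show ?thesis
      by simp
  qed
  then have "\<forall>\<^sub>F e in at 0. of_real e ^ (n - m) * (\<phi> e / of_real e ^ n) = \<phi> e / of_real e ^ m"
    by (auto simp: eventually_at_filter)
  moreover have
    "((\<lambda>e. of_real e ^ (n - m) * (\<phi> e / of_real e ^ n)) \<longlongrightarrow> 0 ^ (n - m) * b) (at 0)"
    using tendsto_of_real[OF tendsto_ident_at[of 0 UNIV], where 'a = 'a]
    by (intro tendsto_intros assms(3)) simp_all
  ultimately have "((\<lambda>e. \<phi> e / of_real e ^ m) \<longlongrightarrow> 0 ^ (n - m) * b) (at 0)"
    by (rule Lim_transform_eventually[rotated])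
  then have "((\<lambda>e. \<phi> e / of_real e ^ m) \<longlongrightarrow> 0) (at 0)"
    using \<open>\<not> n \<le> m\<close> by (simp add: power_0_left)
  with assms(1,2) show False
    using tendsto_unique[OF at_neq_bot] by blast
qed

lemma vanishing_order_unique:
  fixes \<phi> \<psi> :: "real \<Rightarrow> 'a::real_normed_field"
  assumes "\<forall>\<^sub>F e in at 0. \<phi> e = \<psi> e"
    and "((\<lambda>e. \<phi> e / of_real e ^ m) \<longlongrightarrow> a) (at 0)" "a \<noteq> 0"
    and "((\<lambda>e. \<psi> e / of_real e ^ n) \<longlongrightarrow> b) (at 0)" "b \<noteq> 0"
  shows "m = n"
proof -
  have "\<forall>\<^sub>F e in at 0. \<psi> e / of_real e ^ n = \<phi> e / of_real e ^ n"
    using assms(1) by (auto elim: eventually_mono)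
  then have "((\<lambda>e. \<phi> e / of_real e ^ n) \<longlongrightarrow> b) (at 0)"
    by (rule Lim_transform_eventually[OF assms(4)])
  then show ?thesis
    using vanishing_order_le[OF assms(2,3)] vanishing_order_le[OF _ assms(5) assms(2)]
    by fastforce
qed

section \<open>Unit-speed curves and their parallel curves\<close>

lemma interior_vimage_finite_eq_empty:
  fixes h :: "real \<Rightarrow> 'a::real_normed_algebra_1"
  assumes "continuous_on UNIV h" and "finite B"
    and nowhere_constant: "\<And>a b. a < b \<Longrightarrow> \<not> h constant_on {a<..<b}"
  shows "interior (h -` B) = {}"
proof (rule ccontr)
  assume "interior (h -` B) \<noteq> {}"
  then obtain x e where "e > 0" "ball x e \<subseteq> h -` B"
    by (metis all_not_in_conv interior_subset open_contains_ball_eq open_interior subset_trans)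
  moreover have "ball x e = {x - e<..<x + e}"
    by (auto simp: dist_real_def)
  ultimately have "finite (h ` {x - e<..<x + e})"
    using \<open>finite B\<close> by (metis finite_subset image_subset_iff_subset_vimage)
  then have "h constant_on {x - e<..<x + e}"
    using assms(1) by (intro continuous_finite_range_constant) (auto intro: continuous_on_subset)
  with nowhere_constant[of "x - e" "x + e"] \<open>e > 0\<close> show False
    by simp
qed

locale unit_speed_curve =
  fixes g :: "real \<Rightarrow> complex"
  assumes smooth: "smooth_curve g" and unit_speed: "\<And>t. norm (vderiv g t) = 1"
begin

abbreviation "g' \<equiv> vderiv g"
abbreviation "g'' \<equiv> vderiv g'"
abbreviation "g''' \<equiv> vderiv g''"
abbreviation "k \<equiv> curvature g"

lemma has_vector_derivative_iterated_vderiv: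
  "((vderiv ^^ n) g has_vector_derivative (vderiv ^^ Suc n) g t) (at t)"
  using smooth unfolding smooth_curve_def by (simp add: vector_derivative_works vderiv_def)

lemma has_vector_derivative_curve: "(g has_vector_derivative g' t) (at t)"
  using has_vector_derivative_iterated_vderiv[of 0] by simp

lemma has_vector_derivative_tangent: "(g' has_vector_derivative g'' t) (at t)"
  using has_vector_derivative_iterated_vderiv[of 1] by simp

lemma has_vector_derivative_acceleration: "(g'' has_vector_derivative g''' t) (at t)"
  using has_vector_derivative_iterated_vderiv[of 2] by (simp add: numeral_2_eq_2)

lemma cnj_tangent_mult_tangent: "cnj (g' t) * g' t = 1"
  using unit_speed[of t] complex_norm_square[of "g' t"] by (simp add: mult.commute)

lemma tangent_mult_cnj_tangent_mult: "g' t * (cnj (g' t) * z) = z"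
  by (metis cnj_tangent_mult_tangent mult.assoc mult.commute mult.left_neutral)

lemma cnj_tangent_mult_acceleration_sum: "cnj (g' t) * g'' t + cnj (g'' t) * g' t = 0"
proof -
  have "((\<lambda>t. cnj (g' t) * g' t) has_vector_derivative cnj (g' t) * g'' t + cnj (g'' t) * g' t) (at t)"
    by (intro has_vector_derivative_mult has_vector_derivative_cnj has_vector_derivative_tangent)
  then show ?thesis
    by (rule has_vector_derivative_of_constant_eq_0[rotated]) (rule cnj_tangent_mult_tangent)
qed

lemma frenet: "g'' t = \<i> * of_real (k t) * g' t"
proof -
  have "Re (cnj (g' t) * g'' t) = 0"
    using arg_cong[OF cnj_tangent_mult_acceleration_sum[of t], of Re] by simp
  then have "cnj (g' t) * g'' t = \<i> * of_real (k t)"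
    by (simp add: curvature_def complex_eq_iff)
  then show ?thesis
    using tangent_mult_cnj_tangent_mult[of t "g'' t"] by (simp add: ac_simps)
qed

lemma Re_cnj_tangent_mult_jerk: "Re (cnj (g' t) * g''' t) = - (k t)\<^sup>2"
proof -
  have "((\<lambda>t. cnj (g' t) * g'' t + cnj (g'' t) * g' t) has_vector_derivative
      cnj (g' t) * g''' t + cnj (g'' t) * g'' t + (cnj (g'' t) * g'' t + cnj (g''' t) * g' t)) (at t)"
    by (intro has_vector_derivative_add has_vector_derivative_mult has_vector_derivative_cnj
        has_vector_derivative_tangent has_vector_derivative_acceleration)
  then have "cnj (g' t) * g''' t + cnj (g'' t) * g'' t + (cnj (g'' t) * g'' t + cnj (g''' t) * g' t) = 0"
    by (rule has_vector_derivative_of_constant_eq_0[rotated]) (rule cnj_tangent_mult_acceleration_sum)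
  from arg_cong[OF this, of Re] have "Re (cnj (g' t) * g''' t) + Re (cnj (g'' t) * g'' t) = 0"
    by simp
  moreover have "cnj (g'' t) * g'' t = of_real ((k t)\<^sup>2)"
    using cnj_tangent_mult_tangent[of t] by (simp add: frenet algebra_simps power2_eq_square)
  ultimately show ?thesis by simp
qed

lemma has_vector_derivative_parallel_curve:
  "(parallel_curve g d has_vector_derivative g' t + of_real d * \<i> * g'' t) (at t)"
  unfolding parallel_curve_def
  by (intro has_vector_derivative_add has_vector_derivative_curve
      has_vector_derivative_mult_right has_vector_derivative_tangent)

lemma parallel_curve_velocity: "g' t + of_real d * \<i> * g'' t = of_real (1 - d * k t) * g' t"
  by (simp add: frenet algebra_simps)

lemma has_vector_derivative_parallel_velocity:
  "((\<lambda>t. g' t + of_real d * \<i> * g'' t) has_vector_derivative g'' t + of_real d * \<i> * g''' t) (at t)"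
  by (intro has_vector_derivative_add has_vector_derivative_tangent
      has_vector_derivative_mult_right has_vector_derivative_acceleration)

lemma parallel_curve_acceleration:
  obtains \<tau> :: real where
    "g'' t + of_real d * \<i> * g''' t = of_real (k t * (1 - d * k t)) * (\<i> * g' t) + of_real \<tau> * g' t"
proof
  define j where "j = cnj (g' t) * g''' t"
  have "j = of_real (- (k t)\<^sup>2) + \<i> * of_real (Im j)"
    using Re_cnj_tangent_mult_jerk[of t] by (simp add: j_def complex_eq_iff)
  moreover have "g''' t = g' t * j"
    using tangent_mult_cnj_tangent_mult[of t "g''' t"] by (simp add: j_def)
  ultimately have jerk: "g''' t = g' t * (of_real (- (k t)\<^sup>2) + \<i> * of_real (Im j))"
    by simp
  show "g'' t + of_real d * \<i> * g''' t
      = of_real (k t * (1 - d * k t)) * (\<i> * g' t) + of_real (- d * Im j) * g' t"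
    by (simp only: frenet jerk) (simp add: algebra_simps power2_eq_square)
qed

lemma dir_deriv_tangent_eq_0:
  assumes zero: "\<And>t. evalC f (parallel_curve g d t) = 0" and nondeg: "1 - d * k s \<noteq> 0"
  shows "dir_deriv f (parallel_curve g d s) (g' s) = 0"
proof -
  have "dir_deriv f (parallel_curve g d s) (of_real (1 - d * k s) * g' s) = 0"
    using dir_deriv_vanishing_on_path[OF has_vector_derivative_parallel_curve
        has_vector_derivative_parallel_velocity zero]
    by (simp only: parallel_curve_velocity)
  with nondeg show ?thesis
    by (metis dir_deriv_scale mult_eq_0_iff of_real_eq_0_iff)
qed

lemma hessian_form_tangent:
  assumes zero: "\<And>t. evalC f (parallel_curve g d t) = 0" and nondeg: "1 - d * k s \<noteq> 0"
  shows "of_real (1 - d * k s) * hessian_form f (parallel_curve g d s) (g' s) (g' s)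
       = - of_real (k s) * dir_deriv f (parallel_curve g d s) (\<i> * g' s)"
proof -
  let ?p = "parallel_curve g d s" and ?c = "complex_of_real (1 - d * k s)"
  obtain \<tau> where acceleration:
    "g'' s + of_real d * \<i> * g''' s = of_real (k s * (1 - d * k s)) * (\<i> * g' s) + of_real \<tau> * g' s"
    by (rule parallel_curve_acceleration)
  have "hessian_form f ?p (?c * g' s) (?c * g' s)
      + dir_deriv f ?p (of_real (k s * (1 - d * k s)) * (\<i> * g' s) + of_real \<tau> * g' s) = 0"
    using hessian_form_vanishing_on_path[OF has_vector_derivative_parallel_curve
        has_vector_derivative_parallel_velocity zero, of s]
    by (simp only: parallel_curve_velocity acceleration)
  moreover have "dir_deriv f ?p (of_real (k s * (1 - d * k s)) * (\<i> * g' s) + of_real \<tau> * g' s)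
      = of_real (k s * (1 - d * k s)) * dir_deriv f ?p (\<i> * g' s)"
    by (simp only: dir_deriv_add dir_deriv_scale dir_deriv_tangent_eq_0[OF zero nondeg]) simp
  moreover have "?c * (?c * hessian_form f ?p (g' s) (g' s) + of_real (k s) * dir_deriv f ?p (\<i> * g' s))
      = of_real ((1 - d * k s) * (1 - d * k s)) * hessian_form f ?p (g' s) (g' s)
        + of_real (k s * (1 - d * k s)) * dir_deriv f ?p (\<i> * g' s)"
    by (simp add: algebra_simps)
  ultimately have "?c * (?c * hessian_form f ?p (g' s) (g' s) + of_real (k s) * dir_deriv f ?p (\<i> * g' s)) = 0"
    by (simp only: hessian_form_scale)
  with nondeg have "?c * hessian_form f ?p (g' s) (g' s) + of_real (k s) * dir_deriv f ?p (\<i> * g' s) = 0"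
    by (metis mult_eq_0_iff of_real_eq_0_iff)
  then show ?thesis
    by (simp only: eq_neg_iff_add_eq_0 mult_minus_left)
qed

section \<open>Vanishing along the normal circle\<close>

text \<open>For d = \<plusminus>r and \<sigma> = \<minusplus>1 the points of the normal circle are the Larmor centres
  g s \<plusminus> r R_{\<minusplus>e} J g'(s) of the statement.\<close>

definition normal_circle :: "real \<Rightarrow> real \<Rightarrow> real \<Rightarrow> real \<Rightarrow> complex" where
  "normal_circle d \<sigma> s e = g s + of_real d * cis (\<sigma> * e) * \<i> * g' s"

lemma normal_circle_0: "normal_circle d \<sigma> s 0 = parallel_curve g d s"
  by (simp add: normal_circle_def parallel_curve_def)

lemma has_vector_derivative_normal_circle:
  "(normal_circle d \<sigma> s has_vector_derivative \<i> * of_real \<sigma> * (normal_circle d \<sigma> s e - g s)) (at e)"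
proof -
  have "((\<lambda>e. g s + of_real d * cis (\<sigma> * e) * (\<i> * g' s)) has_vector_derivative
      0 + \<i> * of_real \<sigma> * (of_real d * cis (\<sigma> * e) * (\<i> * g' s))) (at e)"
    by (intro has_vector_derivative_add has_vector_derivative_const has_vector_derivative_cis_circle)
  then show ?thesis
    unfolding normal_circle_def by (simp add: mult.assoc)
qed

lemma has_vector_derivative_normal_circle_velocity:
  "((\<lambda>e. \<i> * of_real \<sigma> * (normal_circle d \<sigma> s e - g s)) has_vector_derivative
     \<i> * of_real \<sigma> * (\<i> * of_real \<sigma> * (normal_circle d \<sigma> s e - g s))) (at e)"
  using has_vector_derivative_mult_right[OF has_vector_derivative_diff[OF
        has_vector_derivative_normal_circle has_vector_derivative_const]]
  by simp

lemma tendsto_evalC_normal_circle: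
  "((\<lambda>e. evalC h (normal_circle d \<sigma> s e)) \<longlongrightarrow> evalC h (parallel_curve g d s)) (at 0)"
proof -
  have "continuous (at 0) (\<lambda>e. evalC h (normal_circle d \<sigma> s e))"
    by (rule has_vector_derivative_continuous[OF
          has_vector_derivative_evalC[OF has_vector_derivative_normal_circle]])
  then show ?thesis
    by (simp add: continuous_at normal_circle_0)
qed

text \<open>The normal circle touches the parallel curve at e = 0, but its centre g s differs from the
  centre of curvature g s + J g'(s) / k s of the parallel curve there (parallel curves share their
  evolute), so f vanishes to order exactly two along the circle.\<close>

lemma normal_circle_vanishing_order_two:
  assumes zero: "\<And>t. evalC f (parallel_curve g d t) = 0"
    and "d \<noteq> 0" and "\<sigma> \<noteq> 0" and nondeg: "1 - d * k s \<noteq> 0"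
    and smooth_point: "evalC (pderiv f) (parallel_curve g d s) \<noteq> 0"
  obtains a where "a \<noteq> 0"
    "((\<lambda>e. evalC f (normal_circle d \<sigma> s e) / of_real e ^ 2) \<longlongrightarrow> a) (at 0)"
proof -
  let ?p = "parallel_curve g d s" and ?T = "g' s"
  define c where "c = hessian_form f ?p (of_real (- d * \<sigma>) * ?T) (of_real (- d * \<sigma>) * ?T)
    + dir_deriv f ?p (of_real (- d * \<sigma> * \<sigma>) * (\<i> * ?T))"
  have velocity: "\<i> * of_real \<sigma> * (?p - g s) = of_real (- d * \<sigma>) * ?T"
    by (simp add: parallel_curve_def algebra_simps)
  have acceleration:
    "\<i> * of_real \<sigma> * (of_real (- d * \<sigma>) * ?T) = of_real (- d * \<sigma> * \<sigma>) * (\<i> * ?T)"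
    by (simp add: algebra_simps)
  have tangent: "dir_deriv f ?p ?T = 0"
    by (rule dir_deriv_tangent_eq_0[OF zero nondeg])
  have normal: "dir_deriv f ?p (\<i> * ?T) \<noteq> 0"
    by (rule dir_deriv_normal_neq_0[OF unit_speed tangent smooth_point])
  have "((\<lambda>e. evalC f (normal_circle d \<sigma> s e) / of_real e ^ 2) \<longlongrightarrow> c / 2) (at 0)"
    using evalC_path_second_order[OF
        has_vector_derivative_normal_circle[where d = d and \<sigma> = \<sigma> and s = s]
        has_vector_derivative_normal_circle_velocity, of f]
    by (simp only: normal_circle_0 zero velocity acceleration dir_deriv_scale tangent mult_zero_right
        c_def simp_thms)
  moreover have "of_real (1 - d * k s) * c = - of_real (d * \<sigma> * \<sigma>) * dir_deriv f ?p (\<i> * ?T)"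
  proof -
    have c_eq: "c = of_real (d * \<sigma> * (d * \<sigma>)) * hessian_form f ?p ?T ?T
        - of_real (d * \<sigma> * \<sigma>) * dir_deriv f ?p (\<i> * ?T)"
      unfolding c_def by (simp only: hessian_form_scale dir_deriv_scale) (simp add: algebra_simps)
    have "of_real (1 - d * k s) * c
        = of_real (d * \<sigma> * (d * \<sigma>)) * (of_real (1 - d * k s) * hessian_form f ?p ?T ?T)
          - of_real (1 - d * k s) * of_real (d * \<sigma> * \<sigma>) * dir_deriv f ?p (\<i> * ?T)"
      unfolding c_eq by (simp add: algebra_simps)
    also have "\<dots> = of_real (d * \<sigma> * (d * \<sigma>)) * (- of_real (k s) * dir_deriv f ?p (\<i> * ?T))
          - of_real (1 - d * k s) * of_real (d * \<sigma> * \<sigma>) * dir_deriv f ?p (\<i> * ?T)"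
      by (simp only: hessian_form_tangent[OF zero nondeg])
    also have "\<dots> = - of_real (d * \<sigma> * \<sigma>) * dir_deriv f ?p (\<i> * ?T)"
      by (simp add: algebra_simps)
    finally show ?thesis .
  qed
  then have "c \<noteq> 0"
    using normal \<open>d \<noteq> 0\<close> \<open>\<sigma> \<noteq> 0\<close> by auto
  ultimately show ?thesis
    by (intro that[of "c / 2"]) auto
qed

lemma normal_circle_vanishing_order:
  assumes zero: "\<And>t. evalC f (parallel_curve g d t) = 0"
    and "d \<noteq> 0" and "\<sigma> \<noteq> 0" and nondeg: "1 - d * k s \<noteq> 0"
    and smooth_point: "evalC (pderiv f) (parallel_curve g d s) \<noteq> 0"
    and cofactor: "evalC h (parallel_curve g d s) \<noteq> 0"
  obtains a where "a \<noteq> 0"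
    "((\<lambda>e. evalC (f ^ m * h) (normal_circle d \<sigma> s e) / of_real e ^ (2 * m)) \<longlongrightarrow> a) (at 0)"
proof -
  obtain a where "a \<noteq> 0"
    and a: "((\<lambda>e. evalC f (normal_circle d \<sigma> s e) / of_real e ^ 2) \<longlongrightarrow> a) (at 0)"
    using normal_circle_vanishing_order_two[OF assms(1-5)] .
  have "((\<lambda>e. (evalC f (normal_circle d \<sigma> s e) / of_real e ^ 2) ^ m
                * evalC h (normal_circle d \<sigma> s e))
      \<longlongrightarrow> a ^ m * evalC h (parallel_curve g d s)) (at 0)"
    by (intro tendsto_intros a tendsto_evalC_normal_circle)
  moreover have "(evalC f z / of_real e ^ 2) ^ m * evalC h z = evalC (f ^ m * h) z / of_real e ^ (2 * m)"
    for z and e :: real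
    by (simp add: power_mult power_divide)
  ultimately show ?thesis
    using \<open>a \<noteq> 0\<close> cofactor by (intro that[of "a ^ m * evalC h (parallel_curve g d s)"]) auto
qed

section \<open>Generic parameters\<close>

lemma has_vector_derivative_Re_tangent: "((\<lambda>t. Re (g' t)) has_vector_derivative Re (g'' t)) (at t)"
  using has_field_derivative_Re[OF has_vector_derivative_tangent]
  by (simp add: has_real_derivative_iff_has_vector_derivative)

lemma curved_imp_tangent_not_vertical:
  assumes curved: "\<And>t. k t \<noteq> 0" and vertical: "\<And>t. Re (g' t) = 0"
  shows False
proof -
  have "Re (g'' t) = 0" for t
    using vertical has_vector_derivative_Re_tangent by (rule has_vector_derivative_of_constant_eq_0)
  then have "k t * Im (g' t) = 0" for t
    by (simp add: frenet)
  then have "Im (g' t) = 0" for t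
    using curved by (metis mult_eq_0_iff)
  with vertical have "g' 0 = 0"
    by (simp add: complex_eq_iff)
  with unit_speed[of 0] show False
    by simp
qed

lemma degree_pos_if_vanishing_on_parallel_curve:
  assumes "f \<noteq> 0" and zero: "\<And>t. evalC f (parallel_curve g d t) = 0"
    and nondeg: "\<And>t. 1 - d * k t \<noteq> 0" and curved: "\<And>t. k t \<noteq> 0"
  shows "degree f > 0"
proof (rule ccontr)
  assume "\<not> degree f > 0"
  then obtain c where f: "f = [:c:]" and "c \<noteq> 0"
    using \<open>f \<noteq> 0\<close> by (metis degree_eq_zeroE gr0I pCons_0_0)
  define x where "x t = Re (parallel_curve g d t)" for t
  have "poly c (of_real (x t)) = 0" for t
    using zero[of t] by (simp add: f x_def evalC_def)
  then have "x ` UNIV \<subseteq> Re ` {z. poly c z = 0}"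
    by (auto intro!: image_eqI[where x = "of_real (x _)"])
  then have "finite (x ` UNIV)"
    using poly_roots_finite[OF \<open>c \<noteq> 0\<close>] finite_subset by blast
  have x_deriv: "(x has_vector_derivative (1 - d * k t) * Re (g' t)) (at t)" for t
    using has_field_derivative_Re[OF has_vector_derivative_parallel_curve, of d t]
    by (simp add: x_def[abs_def] parallel_curve_velocity has_real_derivative_iff_has_vector_derivative)
  then have "continuous_on UNIV x"
    by (intro continuous_on_vector_derivative) (auto intro: has_vector_derivative_at_within)
  with \<open>finite (x ` UNIV)\<close> have "x constant_on UNIV"
    by (intro continuous_finite_range_constant) auto
  then obtain x0 where "\<And>t. x t = x0"
    by (auto simp: constant_on_def)
  then have "(1 - d * k t) * Re (g' t) = 0" for t
    using x_deriv by (rule has_vector_derivative_of_constant_eq_0)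
  with nondeg have "Re (g' t) = 0" for t
    by (metis mult_eq_0_iff)
  with curved show False
    by (rule curved_imp_tangent_not_vertical)
qed

lemma continuous_on_parallel_curve: "continuous_on UNIV (parallel_curve g d)"
  by (intro continuous_on_vector_derivative)
     (auto intro: has_vector_derivative_at_within has_vector_derivative_parallel_curve)

lemma parallel_curve_not_constant_on:
  assumes nondeg: "\<And>t. 1 - d * k t \<noteq> 0" and "a < b"
  shows "\<not> parallel_curve g d constant_on {a<..<b}"
proof
  assume "parallel_curve g d constant_on {a<..<b}"
  then obtain z where z: "\<And>t. t \<in> {a<..<b} \<Longrightarrow> parallel_curve g d t = z"
    by (auto simp: constant_on_def)
  define m where "m = (a + b) / 2"
  have "m \<in> {a<..<b}"
    using \<open>a < b\<close> by (simp add: m_def)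
  then have "((\<lambda>t. z) has_vector_derivative g' m + of_real d * \<i> * g'' m) (at m)"
    by (rule has_vector_derivative_transform_within_open[OF has_vector_derivative_parallel_curve
          open_greaterThanLessThan]) (use z in auto)
  then have "of_real (1 - d * k m) * g' m = 0"
    unfolding parallel_curve_velocity by (rule has_vector_derivative_of_constant_eq_0[rotated]) simp
  with nondeg[of m] have "g' m = 0"
    by (metis mult_eq_0_iff of_real_eq_0_iff)
  with unit_speed[of m] show False
    by simp
qed

lemma exists_parameter_avoiding:
  assumes "\<And>t. 1 - d1 * k t \<noteq> 0" "\<And>t. 1 - d2 * k t \<noteq> 0" and "finite B1" "finite B2"
  obtains s where "parallel_curve g d1 s \<notin> B1" "parallel_curve g d2 s \<notin> B2"
proof -
  have "closed (parallel_curve g d1 -` B1)"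
    using \<open>finite B1\<close> by (intro closed_vimage finite_imp_closed continuous_on_parallel_curve)
  moreover have "interior (parallel_curve g d -` B) = {}" if "\<And>t. 1 - d * k t \<noteq> 0" "finite B" for d B
    using continuous_on_parallel_curve \<open>finite B\<close> parallel_curve_not_constant_on[OF that(1)]
    by (rule interior_vimage_finite_eq_empty)
  ultimately have "interior (parallel_curve g d1 -` B1 \<union> parallel_curve g d2 -` B2) = {}"
    using assms by (simp add: interior_closed_Un_empty_interior)
  then have "parallel_curve g d1 -` B1 \<union> parallel_curve g d2 -` B2 \<noteq> UNIV"
    by auto
  with that show ?thesis
    by blast
qed

lemma exists_generic_parameter:
  assumes f: "irreducible f" "\<And>t. evalC f (parallel_curve g d t) = 0" "\<And>t. 1 - d * k t \<noteq> 0"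
    and h: "irreducible h" "\<And>t. evalC h (parallel_curve g d' t) = 0" "\<And>t. 1 - d' * k t \<noteq> 0"
    and curved: "\<And>t. k t \<noteq> 0" and "\<not> f dvd h" and "finite Z"
  obtains s where
    "evalC (pderiv f) (parallel_curve g d s) \<noteq> 0" "evalC h (parallel_curve g d s) \<noteq> 0"
    "parallel_curve g d s \<notin> Z"
    "evalC (pderiv h) (parallel_curve g d' s) \<noteq> 0" "evalC f (parallel_curve g d' s) \<noteq> 0"
    "parallel_curve g d' s \<notin> Z"
proof -
  have "f \<noteq> 0" "h \<noteq> 0"
    using f(1) h(1) by auto
  then have "degree f > 0" "degree h > 0"
    using degree_pos_if_vanishing_on_parallel_curve f(2,3) h(2,3) curved by blast+
  have "\<not> h dvd f"
    using irreducibleD'[OF f(1)] irreducible_not_unit[OF h(1)] \<open>\<not> f dvd h\<close> by blast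
  define bad where "bad p q =
    {z. evalC p z = 0 \<and> evalC q z = 0} \<union> {z. evalC p z = 0 \<and> evalC (pderiv p) z = 0} \<union> Z"
    for p q :: "complex poly poly"
  have "finite (bad p q)" if "irreducible p" "degree p > 0" "\<not> p dvd q" for p q
    unfolding bad_def
    using finite_common_zeros[OF that] finite_common_zeros[OF that(1,2) not_dvd_pderiv]
      \<open>finite Z\<close> that(2)
    by simp
  then have "finite (bad f h)" "finite (bad h f)"
    using f(1) h(1) \<open>degree f > 0\<close> \<open>degree h > 0\<close> \<open>\<not> f dvd h\<close> \<open>\<not> h dvd f\<close>
    by blast+
  then obtain s where "parallel_curve g d s \<notin> bad f h" "parallel_curve g d' s \<notin> bad h f"
    by (rule exists_parameter_avoiding[OF f(3) h(3)])
  then show ?thesis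
    using f(2)[of s] h(2)[of s] unfolding bad_def by (intro that) auto
qed

end

theorem proposition5p6:
  fixes \<Omega> :: "complex set" and \<gamma> :: "real \<Rightarrow> complex" and L \<beta> r :: real
    and F :: "real poly poly" and fp fm g1 :: "complex poly poly" and m n :: nat
  assumes dom: "open \<Omega>" "convex \<Omega>" "bounded \<Omega>" "\<Omega> \<noteq> {}"
    and L: "L > 0"
    and periodic: "\<forall>s. \<gamma> (s + L) = \<gamma> s"
    and simple: "inj_on \<gamma> {0..<L}"
    and smooth: "smooth_curve \<gamma>"
    and arclength: "\<forall>s. norm (vderiv \<gamma> s) = 1"
    and boundary: "frontier \<Omega> = \<gamma> ` {0..L}"
    and ccw: "\<forall>w\<in>\<Omega>. winding_number (\<lambda>t. \<gamma> (L * t)) w = 1"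
    and beta: "0 < \<beta>" "\<forall>s. \<beta> < curvature \<gamma> s"
    and r: "r = 1 / \<beta>"
    and F_nz: "F \<noteq> 0"
    and F_van: "\<forall>s. evalR F (parallel_curve \<gamma> r s) = 0 \<and> evalR F (parallel_curve \<gamma> (- r) s) = 0"
    and F_sym: "\<forall>s. \<exists>\<delta>>0. \<forall>\<epsilon>. \<bar>\<epsilon>\<bar> < \<delta> \<longrightarrow>
       evalR F (\<gamma> s + r * cis (- \<epsilon>) * \<i> * vderiv \<gamma> s)
         = evalR F (\<gamma> s - r * cis \<epsilon> * \<i> * vderiv \<gamma> s)"
    and fp: "irreducible fp" "\<forall>s. evalC fp (parallel_curve \<gamma> r s) = 0"
    and fm: "irreducible fm" "\<forall>s. evalC fm (parallel_curve \<gamma> (- r) s) = 0"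
    and distinct: "\<not> fp dvd fm"
    and fact: "complexify F = fp ^ m * fm ^ n * g1"
    and g1: "finite {z \<in> range (parallel_curve \<gamma> r) \<union> range (parallel_curve \<gamma> (- r)). evalC g1 z = 0}"
  shows "m = n"
proof -
  interpret unit_speed_curve \<gamma>
    using smooth arclength by unfold_locales auto
  have "r > 0"
    using beta(1) r by simp
  have rk: "1 < r * curvature \<gamma> t" for t
    using mult_strict_left_mono[OF beta(2)[rule_format, of t] \<open>r > 0\<close>] beta(1) r by simp
  have nondeg: "1 - r * curvature \<gamma> t \<noteq> 0" "1 - (- r) * curvature \<gamma> t \<noteq> 0"
    and curved: "curvature \<gamma> t \<noteq> 0" for t
    using rk[of t] by auto
  let ?P = "parallel_curve \<gamma> r" and ?M = "parallel_curve \<gamma> (- r)"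
  obtain s where P: "evalC (pderiv fp) (?P s) \<noteq> 0" "evalC fm (?P s) \<noteq> 0" "evalC g1 (?P s) \<noteq> 0"
    and M: "evalC (pderiv fm) (?M s) \<noteq> 0" "evalC fp (?M s) \<noteq> 0" "evalC g1 (?M s) \<noteq> 0"
    by (rule exists_generic_parameter[OF fp(1) fp(2)[rule_format] nondeg(1)
          fm(1) fm(2)[rule_format] nondeg(2) curved distinct g1]) auto
  have "r \<noteq> 0" "- r \<noteq> 0" "(- 1 :: real) \<noteq> 0" "(1 :: real) \<noteq> 0"
    using \<open>r > 0\<close> by simp_all
  obtain a where "a \<noteq> 0" and a: "((\<lambda>e. evalC (fp ^ m * (fm ^ n * g1)) (normal_circle r (- 1) s e)
      / of_real e ^ (2 * m)) \<longlongrightarrow> a) (at 0)"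
    by (rule normal_circle_vanishing_order[where m = m and h = "fm ^ n * g1",
          OF fp(2)[rule_format] \<open>r \<noteq> 0\<close> \<open>- 1 \<noteq> 0\<close> nondeg(1) P(1)]) (use P in simp)
  obtain b where "b \<noteq> 0" and b: "((\<lambda>e. evalC (fm ^ n * (fp ^ m * g1)) (normal_circle (- r) 1 s e)
      / of_real e ^ (2 * n)) \<longlongrightarrow> b) (at 0)"
    by (rule normal_circle_vanishing_order[where m = n and h = "fp ^ m * g1",
          OF fm(2)[rule_format] \<open>- r \<noteq> 0\<close> \<open>1 \<noteq> 0\<close> nondeg(2) M(1)]) (use M in simp)
  have F_eq: "evalC (fp ^ m * (fm ^ n * g1)) z = of_real (evalR F z)"
      "evalC (fm ^ n * (fp ^ m * g1)) z = of_real (evalR F z)" for z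
    using evalC_complexify[of F z] by (simp_all add: fact mult_ac)
  have "\<forall>\<^sub>F \<epsilon> in at 0.
      evalR F (\<gamma> s + r * cis (- \<epsilon>) * \<i> * vderiv \<gamma> s) = evalR F (\<gamma> s - r * cis \<epsilon> * \<i> * vderiv \<gamma> s)"
    using F_sym[rule_format, of s] by (force simp: eventually_at dist_real_def)
  then have "\<forall>\<^sub>F e in at 0. evalC (fp ^ m * (fm ^ n * g1)) (normal_circle r (- 1) s e)
      = evalC (fm ^ n * (fp ^ m * g1)) (normal_circle (- r) 1 s e)"
    by (rule eventually_mono) (simp add: normal_circle_def F_eq del: evalC_mult)
  from vanishing_order_unique[OF this a \<open>a \<noteq> 0\<close> b \<open>b \<noteq> 0\<close>] show "m = n"
    by simp
qed

end
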